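(* If a spherical curve $P$ has an incoherent bigon, then $r(P)\le 1$.
   Context: A spherical curve is a smooth immersion $P:S^1\to S^2$ whose self-intersections are finitely many transverse double points, called crossings. It is oriented and has at least one crossing. Regions are the components of $S^2\setminus P(S^1)$, and edges are the arcs of the curve between consecutive crossings. An $n$-gon is a region bounded by $n$ edges; a bigon is a $2$-gon. A region is coherent if its boundary edges, with the orientations induced from $P$, all run in the same rotational direction around the region; otherwise it is incoherent. In Gauss-word terms, a bigon with crossings $y,z$ is coherent iff the word has the form $y z\,W_1\,z y\,W_2$, and incoherent iff it has the form $y z\,W_1\,y z\,W_2$. The Gauss word is the cyclic word of crossings met in one traversal of the curve; each crossing appears twice. Crossings $a,b$ are interlaced if their occurrences alternate $a\dots b\dots a\dots b$. A crossing is reducible if no crossing is interlaced with it; equivalently, only three distinct regions meet at it. $P$ is reducible if it has a reducible crossing, and reduced otherwise. The inverse-half-twisted splice $I$ at a crossing $p$ takes the curve with cyclic Gauss word $p\,A\,p\,B$ to the curve with Gauss word $\overline{A}\,B$, where $\overline{A}$ is $A$ reversed. Geometrically, $p$ is smoothed in the unique way giving a single closed curve, and the result is re-oriented. The reductivity $r(P)$ is the minimal number of successive applications of $I$ needed to reach a reducible spherical curve; $r(P)=0$ if $P$ is reducible. *)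

theory Defs
  imports Main
begin

text \<open>A spherical curve is represented combinatorially by its Gauss word w (a nonempty
list of crossing labels, each occurring exactly twice) together with, for every crossing c,
a bit eps c recording on which side the second passage through c crosses the first one.
From this data the regions (faces) are computed by face tracing; the curve is spherical
(genus 0) iff the number of faces is (number of crossings) + 2 (Euler).\<close>

definition gauss_word :: "'a list \<Rightarrow> bool" where
  "gauss_word w \<longleftrightarrow> w \<noteq> [] \<and> (\<forall>x\<in>set w. count_list w x = 2)"

text \<open>Edge i runs from position i to position (i+1) mod length w.\<close>

definition other_occ :: "'a list \<Rightarrow> nat \<Rightarrow> nat" where
  "other_occ w p = (THE q. q < length w \<and> q \<noteq> p \<and> w ! q = w ! p)"

text \<open>delta w eps p: at position p, the other strand crosses the strand through p
from its right side to its left side.\<close>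
definition delta :: "'a list \<Rightarrow> ('a \<Rightarrow> bool) \<Rightarrow> nat \<Rightarrow> bool" where
  "delta w eps p = (if (\<forall>q<p. w ! q \<noteq> w ! p) then eps (w ! p) else \<not> eps (w ! p))"

text \<open>A state (i, True) means: edge i traversed in its own direction with the
region on the left; (i, False): edge i traversed against its direction with the region on
the left (i.e. the region lies on the right of edge i). Regions are traced keeping them on
the left, turning left at every crossing.\<close>
definition next_state :: "'a list \<Rightarrow> ('a \<Rightarrow> bool) \<Rightarrow> nat \<times> bool \<Rightarrow> nat \<times> bool" where
  "next_state w eps st = (let L = length w; i = fst st in
     if snd st then
       (let p = Suc i mod L; q = other_occ w p in
          if delta w eps p then (q, True) else ((q + L - 1) mod L, False))
     else
       (let q = other_occ w i in
          if delta w eps i then ((q + L - 1) mod L, False) else (q, True)))"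

definition states :: "'a list \<Rightarrow> (nat \<times> bool) set" where
  "states w = {0..<length w} \<times> UNIV"

definition region_of :: "'a list \<Rightarrow> ('a \<Rightarrow> bool) \<Rightarrow> nat \<times> bool \<Rightarrow> (nat \<times> bool) set" where
  "region_of w eps x = {(next_state w eps ^^ k) x | k. True}"

definition regions :: "'a list \<Rightarrow> ('a \<Rightarrow> bool) \<Rightarrow> (nat \<times> bool) set set" where
  "regions w eps = region_of w eps ` states w"

definition spherical_curve :: "'a list \<Rightarrow> ('a \<Rightarrow> bool) \<Rightarrow> bool" where
  "spherical_curve w eps \<longleftrightarrow> gauss_word w \<and> card (regions w eps) = card (set w) + 2"

definition bigon :: "(nat \<times> bool) set \<Rightarrow> bool" where
  "bigon R \<longleftrightarrow> card R = 2 \<and> card (fst ` R) = 2"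

text \<open>Coherent: all boundary edges run in the same rotational direction around the region.\<close>
definition coherent :: "(nat \<times> bool) set \<Rightarrow> bool" where
  "coherent R \<longleftrightarrow> (\<forall>x\<in>R. snd x) \<or> (\<forall>x\<in>R. \<not> snd x)"

definition interlaced :: "'a list \<Rightarrow> 'a \<Rightarrow> 'a \<Rightarrow> bool" where
  "interlaced w a b \<longleftrightarrow> a \<noteq> b \<and> (\<exists>i j k l. i < j \<and> j < k \<and> k < l \<and> l < length w \<and>
     ((w!i = a \<and> w!j = b \<and> w!k = a \<and> w!l = b) \<or> (w!i = b \<and> w!j = a \<and> w!k = b \<and> w!l = a)))"

definition reducible_crossing :: "'a list \<Rightarrow> 'a \<Rightarrow> bool" where
  "reducible_crossing w c \<longleftrightarrow> c \<in> set w \<and> \<not> (\<exists>b. interlaced w c b)"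

definition reducible :: "'a list \<Rightarrow> bool" where
  "reducible w \<longleftrightarrow> (\<exists>c\<in>set w. reducible_crossing w c)"

text \<open>Inverse-half-twisted splice: cyclic word p A p B becomes rev A @ B
(here B = Y @ X when the linear word is X @ p # A @ p # Y).\<close>
definition splice_step :: "'a list \<Rightarrow> 'a list \<Rightarrow> bool" where
  "splice_step w w' \<longleftrightarrow> (\<exists>p X A Y. w = X @ p # A @ p # Y \<and> p \<notin> set X \<and> p \<notin> set A
     \<and> p \<notin> set Y \<and> w' = rev A @ Y @ X)"

definition reductivity :: "'a list \<Rightarrow> nat" where
  "reductivity w = (LEAST k. \<exists>w'. (splice_step ^^ k) w w' \<and> reducible w')"

end

theory Submission imports Defs begin

(* Face tracing around an incoherent bigon with crossings y and z meets the edges from y to z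
   twice in the same direction, so the Gauss word reads  y z ... y z ...  (cyclically).
   Splicing at y reverses the segment between the two occurrences of y, which begins with z,
   and puts it in front of the rest of the word, which also begins with z: the two occurrences
   of z become adjacent, so z is a reducible crossing of the spliced curve.  The degenerate
   case where face tracing fixes a state is a monogon, i.e. a crossing that is already
   reducible. *)

lemma count_list_eq_card_positions:
  "count_list xs c = card {k. k < length xs \<and> xs ! k = c}"
  by (simp add: count_list_eq_length_filter length_filter_conv_card eq_commute)

lemma gauss_word_count_nth:
  "gauss_word w \<Longrightarrow> i < length w \<Longrightarrow> count_list w (w ! i) = 2"
  unfolding gauss_word_def by simp

lemma position_of_double_letter:
  assumes "count_list w c = 2" and "i < length w" "j < length w" "i \<noteq> j"
    and "w ! i = c" "w ! j = c" "m < length w" "w ! m = c"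
  shows "m = i \<or> m = j"
proof (rule ccontr)
  assume "\<not> ?thesis"
  hence "{i, j, m} \<subseteq> {k. k < length w \<and> w ! k = c}" and "card {i, j, m} = 3"
    using assms by auto
  hence "3 \<le> card {k. k < length w \<and> w ! k = c}"
    by (metis card_mono finite_Collect_conjI finite_Collect_less_nat)
  thus False using assms(1) count_list_eq_card_positions[of w c] by simp
qed

lemma other_occ_spec:
  assumes "gauss_word w" "p < length w"
  shows "other_occ w p < length w \<and> other_occ w p \<noteq> p \<and> w ! other_occ w p = w ! p"
proof -
  let ?S = "{k. k < length w \<and> w ! k = w ! p}"
  have "card ?S = 2"
    using gauss_word_count_nth[OF assms] count_list_eq_card_positions[of w "w ! p"] by simp
  moreover have "p \<in> ?S" using assms(2) by simp
  ultimately have "card (?S - {p}) = 1" by simp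
  then obtain q where q: "?S - {p} = {q}" using card_1_singletonE by blast
  hence "other_occ w p = q" unfolding other_occ_def by (intro the_equality) blast+
  thus ?thesis using q by blast
qed

lemma Suc_mod_less: "i < (n::nat) \<Longrightarrow> Suc i mod n < n"
  by (rule mod_less_divisor) simp

lemma eq_Suc_mod_if_pred_mod_eq: "q < L \<Longrightarrow> (q + L - 1) mod L = b \<Longrightarrow> q = Suc b mod L"
  by (cases q) auto

lemma reducible_if_cyclically_adjacent:
  assumes count: "count_list w c = 2" and i: "i < length w"
    and ij: "Suc i mod length w \<noteq> i" and ci: "w ! i = c" and cj: "w ! (Suc i mod length w) = c"
  shows "reducible w"
proof -
  define j where "j = Suc i mod length w"
  have j: "j < length w" unfolding j_def using Suc_mod_less[OF i] .
  have only_ij: "\<And>m. m < length w \<Longrightarrow> w ! m = c \<Longrightarrow> m = i \<or> m = j"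
    using position_of_double_letter[OF count i j] ij ci cj unfolding j_def by metis
  have consecutive: "j = Suc i \<or> (Suc i = length w \<and> j = 0)"
    unfolding j_def using i by (metis Suc_lessI mod_less mod_self)
  have "\<not> interlaced w c b" for b
  proof
    assume "interlaced w c b"
    then obtain i1 j1 k1 l1 where ord: "i1 < j1" "j1 < k1" "k1 < l1" "l1 < length w"
      and pat: "(w!i1 = c \<and> w!j1 = b \<and> w!k1 = c \<and> w!l1 = b) \<or> (w!i1 = b \<and> w!j1 = c \<and> w!k1 = b \<and> w!l1 = c)"
      and "c \<noteq> b" unfolding interlaced_def by blast
    \<comment> \<open>in either pattern some b lies strictly between the two c's, which are consecutive\<close>
    have "w ! i \<noteq> b" "w ! j \<noteq> b" using \<open>c \<noteq> b\<close> ci cj unfolding j_def by auto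
    from pat show False
    proof
      assume "w!i1 = c \<and> w!j1 = b \<and> w!k1 = c \<and> w!l1 = b"
      hence "i1 \<in> {i, j}" "k1 \<in> {i, j}" "j1 \<notin> {i, j}"
        using only_ij ord \<open>w ! i \<noteq> b\<close> \<open>w ! j \<noteq> b\<close> by auto
      thus False using ord consecutive by auto
    next
      assume "w!i1 = b \<and> w!j1 = c \<and> w!k1 = b \<and> w!l1 = c"
      hence "j1 \<in> {i, j}" "l1 \<in> {i, j}" "k1 \<notin> {i, j}"
        using only_ij ord \<open>w ! i \<noteq> b\<close> \<open>w ! j \<noteq> b\<close> by auto
      thus False using ord consecutive by auto
    qed
  qed
  moreover have "c \<in> set w" using ci i nth_mem by blast
  ultimately show ?thesis unfolding reducible_def reducible_crossing_def by blast
qed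

lemma reducible_if_adjacent:
  assumes "count_list w c = 2" "w = U @ c # c # V"
  shows "reducible w"
  by (rule reducible_if_cyclically_adjacent[OF assms(1), of "length U"])
    (use assms(2) in \<open>auto simp: nth_append\<close>)

lemma reductivity_eq_0_if_reducible: "reducible w \<Longrightarrow> reductivity w = 0"
  unfolding reductivity_def by (rule Least_eq_0) auto

lemma reductivity_le_1_if_splice_reducible:
  assumes "splice_step w w'" "reducible w'"
  shows "reductivity w \<le> 1"
proof -
  have "\<exists>w'. (splice_step ^^ 1) w w' \<and> reducible w'" using assms by auto
  thus ?thesis unfolding reductivity_def by (rule Least_le)
qed

lemma splice_step_reducible_if_repeated_pair:
  assumes gw: "gauss_word w" and ab: "a < b" "b < length w"
    and ya: "w ! a = y" and yb: "w ! b = y"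
    and za: "w ! (Suc a mod length w) = z" and zb: "w ! (Suc b mod length w) = z" and "y \<noteq> z"
  shows "\<exists>w'. splice_step w w' \<and> reducible w'"
proof -
  define X where "X = take a w"
  define A where "A = take (b - Suc a) (drop (Suc a) w)"
  define Y where "Y = drop (Suc b) w"
  have w: "w = X @ y # A @ y # Y"
  proof -
    have "w = take a w @ w ! a # take (b - Suc a) (drop (Suc a) w) @ w ! b # drop (Suc b) w"
      using ab by (metis Cons_nth_drop_Suc Suc_leI append_take_drop_id drop_drop
          le_add_diff_inverse2 order.strict_trans)
    thus ?thesis unfolding X_def A_def Y_def ya yb .
  qed
  have "count_list w y = 2" using gw ab ya gauss_word_count_nth by fastforce
  hence y_once: "y \<notin> set X" "y \<notin> set A" "y \<notin> set Y"
    using w by (auto simp: count_list_0_iff[symmetric])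
  define w' where "w' = rev A @ Y @ X"
  have splice: "splice_step w w'" unfolding splice_step_def w'_def using w y_once by blast
  have "count_list w z = 2"
    using gw ab za gauss_word_count_nth[of w "Suc a mod length w"] by simp
  hence count_z: "count_list w' z = 2" using \<open>y \<noteq> z\<close> unfolding w'_def by (subst (asm) w) auto
  have za': "w ! Suc a = z" using za ab by simp
  hence "Suc a \<noteq> b" using yb \<open>y \<noteq> z\<close> by auto
  hence "A \<noteq> []" "A ! 0 = z" unfolding A_def using ab za' by auto
  then obtain A' where A: "A = z # A'" by (cases A) auto
  \<comment> \<open>Y @ X is the rest of the word, read cyclically after the second y\<close>
  obtain YX where YX: "Y @ X = z # YX"
  proof (cases "Suc b < length w")
    case True
    hence "Y \<noteq> []" "Y ! 0 = z" unfolding Y_def using zb by auto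
    thus ?thesis using that by (cases Y) auto
  next
    case False
    hence "Suc b = length w" using ab by simp
    hence "w ! 0 = z" using zb by simp
    hence "a \<noteq> 0" using ya \<open>y \<noteq> z\<close> by metis
    hence "X \<noteq> []" "X ! 0 = z" "Y = []"
      unfolding X_def Y_def using ab \<open>w ! 0 = z\<close> \<open>Suc b = length w\<close> by auto
    thus ?thesis using that by (cases X) auto
  qed
  have "w' = rev A' @ z # z # YX" unfolding w'_def A YX by simp
  hence "reducible w'" by (rule reducible_if_adjacent[OF count_z])
  with splice show ?thesis by blast
qed

lemma reductivity_le_1_if_repeated_pair:
  assumes gw: "gauss_word w" and a: "a < length w" and b: "b < length w" and "a \<noteq> b"
    and ab: "w ! a = w ! b" and succ: "w ! (Suc a mod length w) = w ! (Suc b mod length w)"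
  shows "reductivity w \<le> 1"
proof (cases "w ! (Suc a mod length w) = w ! a")
  case True
  have "Suc a mod length w \<noteq> a"
  proof (cases "Suc a = length w")
    case True
    thus ?thesis using b \<open>a \<noteq> b\<close> by auto
  next
    case False
    thus ?thesis using a by simp
  qed
  hence "reducible w"
    using reducible_if_cyclically_adjacent[OF gauss_word_count_nth[OF gw a] a] True by simp
  thus ?thesis by (simp add: reductivity_eq_0_if_reducible)
next
  case False
  have "\<exists>w'. splice_step w w' \<and> reducible w'"
  proof (cases "a < b")
    case True
    show ?thesis
      by (rule splice_step_reducible_if_repeated_pair[OF gw True b refl ab[symmetric] refl succ[symmetric]])
        (use \<open>w ! (Suc a mod length w) \<noteq> w ! a\<close> in simp)
  next
    case False
    hence "b < a" using \<open>a \<noteq> b\<close> by simp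
    show ?thesis
      by (rule splice_step_reducible_if_repeated_pair[OF gw \<open>b < a\<close> a refl ab refl succ])
        (use \<open>w ! (Suc a mod length w) \<noteq> w ! a\<close> ab succ in simp)
  qed
  thus ?thesis using reductivity_le_1_if_splice_reducible by blast
qed

lemma next_state_in_states:
  assumes "gauss_word w" "s \<in> states w"
  shows "next_state w eps s \<in> states w"
proof -
  obtain i c where s: "s = (i, c)" by (cases s)
  have i: "i < length w" using assms(2) s unfolding states_def by simp
  hence "0 < length w" by linarith
  thus ?thesis
    using other_occ_spec[OF assms(1) Suc_mod_less[OF i]] other_occ_spec[OF assms(1) i]
    unfolding s next_state_def Let_def states_def by auto
qed

lemma region_of_subset_states:
  assumes "gauss_word w" "x \<in> states w"
  shows "region_of w eps x \<subseteq> states w"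
proof -
  have "(next_state w eps ^^ k) x \<in> states w" for k
    by (induction k) (simp_all add: assms next_state_in_states)
  thus ?thesis unfolding region_of_def by blast
qed

lemma next_state_in_regions:
  assumes "R \<in> regions w eps" "s \<in> R"
  shows "next_state w eps s \<in> R"
proof -
  obtain x where R: "R = region_of w eps x" using assms(1) unfolding regions_def by blast
  then obtain k where "s = (next_state w eps ^^ k) x" using assms(2) unfolding region_of_def by blast
  hence "next_state w eps s = (next_state w eps ^^ Suc k) x" by simp
  thus ?thesis unfolding R region_of_def by blast
qed

lemma regions_subset_states: "gauss_word w \<Longrightarrow> R \<in> regions w eps \<Longrightarrow> R \<subseteq> states w"
  unfolding regions_def using region_of_subset_states by blast

lemma next_state_forward_to_forward:
  "next_state w eps (a, True) = (a', True) \<Longrightarrow> other_occ w (Suc a mod length w) = a'"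
  unfolding next_state_def Let_def by (auto split: if_splits)

lemma next_state_backward_to_forward:
  "next_state w eps (b, False) = (a, True) \<Longrightarrow> other_occ w b = a"
  unfolding next_state_def Let_def by (auto split: if_splits)

lemma next_state_forward_to_backward:
  assumes "gauss_word w" "a < length w" "next_state w eps (a, True) = (b, False)"
  shows "other_occ w (Suc a mod length w) = Suc b mod length w"
proof (rule eq_Suc_mod_if_pred_mod_eq)
  show "other_occ w (Suc a mod length w) < length w"
    using other_occ_spec[OF assms(1) Suc_mod_less[OF assms(2)]] by blast
  show "(other_occ w (Suc a mod length w) + length w - 1) mod length w = b"
    using assms(3) unfolding next_state_def Let_def by (auto split: if_splits)
qed

lemma next_state_backward_to_backward:
  assumes "gauss_word w" "b < length w" "next_state w eps (b, False) = (b', False)"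
  shows "other_occ w b = Suc b' mod length w"
proof (rule eq_Suc_mod_if_pred_mod_eq)
  show "other_occ w b < length w" using other_occ_spec[OF assms(1,2)] by blast
  show "(other_occ w b + length w - 1) mod length w = b'"
    using assms(3) unfolding next_state_def Let_def by (auto split: if_splits)
qed

lemma reducible_if_next_state_fixes_forward:
  assumes gw: "gauss_word w" and a: "a < length w" and fixed: "next_state w eps (a, True) = (a, True)"
  shows "reducible w"
proof -
  have "Suc a mod length w \<noteq> a" "w ! (Suc a mod length w) = w ! a"
    using other_occ_spec[OF gw Suc_mod_less[OF a]] next_state_forward_to_forward[OF fixed] by auto
  thus ?thesis using reducible_if_cyclically_adjacent[OF gauss_word_count_nth[OF gw a] a] by simp
qed

lemma reducible_if_next_state_fixes_backward:
  assumes gw: "gauss_word w" and b: "b < length w" and fixed: "next_state w eps (b, False) = (b, False)"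
  shows "reducible w"
proof -
  have "Suc b mod length w \<noteq> b" "w ! (Suc b mod length w) = w ! b"
    using other_occ_spec[OF gw b] next_state_backward_to_backward[OF gw b fixed] by auto
  thus ?thesis using reducible_if_cyclically_adjacent[OF gauss_word_count_nth[OF gw b] b] by simp
qed

lemma reductivity_le_1_if_next_state_swaps:
  assumes gw: "gauss_word w" and a: "a < length w" and b: "b < length w" and "a \<noteq> b"
    and fwd: "next_state w eps (a, True) = (b, False)"
    and bwd: "next_state w eps (b, False) = (a, True)"
  shows "reductivity w \<le> 1"
proof (rule reductivity_le_1_if_repeated_pair[OF gw a b \<open>a \<noteq> b\<close>])
  show "w ! a = w ! b"
    using other_occ_spec[OF gw b] next_state_backward_to_forward[OF bwd] by simp
  show "w ! (Suc a mod length w) = w ! (Suc b mod length w)"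
    using other_occ_spec[OF gw Suc_mod_less[OF a]] next_state_forward_to_backward[OF gw a fwd]
    by simp
qed

lemma incoherent_bigon_eq:
  assumes "gauss_word w" "R \<in> regions w eps" "bigon R" "\<not> coherent R"
  obtains a b where "R = {(a, True), (b, False)}" "a \<noteq> b" "a < length w" "b < length w"
proof -
  obtain a b where ab: "(a, True) \<in> R" "(b, False) \<in> R"
    using assms(4) unfolding coherent_def by (metis prod.collapse)
  have "card R = 2" "card (fst ` R) = 2" using assms(3) unfolding bigon_def by auto
  then obtain u v where "R = {u, v}" "u \<noteq> v" by (auto simp: card_2_iff)
  hence R: "R = {(a, True), (b, False)}" using ab by auto
  hence "a \<noteq> b" using \<open>card (fst ` R) = 2\<close> by auto
  moreover have "a < length w" "b < length w"
    using regions_subset_states[OF assms(1,2)] ab unfolding states_def by auto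
  ultimately show ?thesis using that R by blast
qed

theorem mainTheorem2:
  fixes w :: "'a list" and eps :: "'a \<Rightarrow> bool" and R :: "(nat \<times> bool) set"
  assumes "spherical_curve w eps"
    and "R \<in> regions w eps"
    and "bigon R"
    and "\<not> coherent R"
  shows "reductivity w \<le> 1"
proof -
  have gw: "gauss_word w" using assms(1) unfolding spherical_curve_def by simp
  obtain a b where R: "R = {(a, True), (b, False)}" and "a \<noteq> b" "a < length w" "b < length w"
    using incoherent_bigon_eq[OF gw assms(2-4)] .
  have fwd: "next_state w eps (a, True) \<in> R" and bwd: "next_state w eps (b, False) \<in> R"
    using next_state_in_regions[OF assms(2)] R by auto
  show ?thesis
  proof (cases "next_state w eps (a, True) = (a, True) \<or> next_state w eps (b, False) = (b, False)")
    case True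
    hence "reducible w"
      using reducible_if_next_state_fixes_forward[OF gw \<open>a < length w\<close>]
        reducible_if_next_state_fixes_backward[OF gw \<open>b < length w\<close>] by blast
    thus ?thesis by (simp add: reductivity_eq_0_if_reducible)
  next
    case False
    hence "next_state w eps (a, True) = (b, False)" "next_state w eps (b, False) = (a, True)"
      using fwd bwd R by auto
    thus ?thesis
      using reductivity_le_1_if_next_state_swaps[OF gw \<open>a < length w\<close> \<open>b < length w\<close> \<open>a \<noteq> b\<close>]
      by blast
  qed
qed

end
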